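(* For $d\in\{0,1\}$, every integer $n\ge3$ and every $j$ with $2\le j\le n-1$, \[ b_{n,d}(1,j)+b_{n,d}(j,1)=2\,p_{n,d}(1,j). \]
   Context: For a permutation $\pi=\pi_1\cdots\pi_n$ of $[n]$ (one-line notation), an ascent is a position $t$ with $\pi_t<\pi_{t+1}$ and a descent one with $\pi_t>\pi_{t+1}$; the height of a word is its number of ascents minus its number of descents. $\pi$ is a ballot permutation if every prefix $\pi_1\cdots\pi_t$ has nonnegative height. $b_{n,d}(i,j)$ is the number of ballot permutations of $[n]$ with exactly $d$ descents that contain $i\,n\,j$ as a factor ($\pi_t=i,\pi_{t+1}=n,\pi_{t+2}=j$ for some $t$). A cycle $(c_1\cdots c_k)$ means $c_1\mapsto c_2\mapsto\cdots\mapsto c_k\mapsto c_1$; $\operatorname{cdes}(c)=\lvert\{t\in[k]:c_t>c_{t+1}\}\rvert$, $\operatorname{casc}(c)=\lvert\{t\in[k]:c_t<c_{t+1}\}\rvert$ with $c_{k+1}=c_1$; the cyclic weight of a cycle is $\min(\operatorname{cdes}(c),\operatorname{casc}(c))$ and that of a permutation is the sum over its cycles. An odd order permutation has all cycles of odd length. $p_{n,d}(i,j)$ is the number of odd order permutations $\pi$ of $[n]$ with cyclic weight $d$ such that $\pi(i)=n$ and $\pi(n)=j$ (i.e. containing $i\,n\,j$ as a cyclic factor). *)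

theory Defs
  imports "HOL-Combinatorics.Permutations"
begin

definition asc_count :: "nat list \<Rightarrow> nat" where
  "asc_count ws = card {t. Suc t < length ws \<and> ws ! t < ws ! Suc t}"

definition des_count :: "nat list \<Rightarrow> nat" where
  "des_count ws = card {t. Suc t < length ws \<and> ws ! t > ws ! Suc t}"

definition height :: "nat list \<Rightarrow> int" where
  "height ws = int (asc_count ws) - int (des_count ws)"

definition is_perm_word :: "nat \<Rightarrow> nat list \<Rightarrow> bool" where
  "is_perm_word n ws \<longleftrightarrow> distinct ws \<and> set ws = {1..n}"

definition ballot :: "nat list \<Rightarrow> bool" where
  "ballot ws \<longleftrightarrow> (\<forall>t \<le> length ws. height (take t ws) \<ge> 0)"

definition has_factor3 :: "nat list \<Rightarrow> nat \<Rightarrow> nat \<Rightarrow> nat \<Rightarrow> bool" where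
  "has_factor3 ws a b c \<longleftrightarrow>
     (\<exists>t. t + 2 < length ws \<and> ws ! t = a \<and> ws ! (t + 1) = b \<and> ws ! (t + 2) = c)"

definition b_count :: "nat \<Rightarrow> nat \<Rightarrow> nat \<Rightarrow> nat \<Rightarrow> nat" where
  "b_count n d i j = card {ws. is_perm_word n ws \<and> ballot ws \<and> des_count ws = d
                               \<and> has_factor3 ws i n j}"

definition cycle_of :: "(nat \<Rightarrow> nat) \<Rightarrow> nat \<Rightarrow> nat set" where
  "cycle_of \<pi> x = {(\<pi> ^^ k) x | k. True}"

definition cycles_of :: "nat \<Rightarrow> (nat \<Rightarrow> nat) \<Rightarrow> nat set set" where
  "cycles_of n \<pi> = cycle_of \<pi> ` {1..n}"

text \<open>cdes / casc of a cycle (c_1 ... c_k): number of cyclic positions with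
  c_t > c_{t+1} resp. c_t < c_{t+1}, where c_{t+1} = \<pi> c_t.\<close>
definition cdes :: "(nat \<Rightarrow> nat) \<Rightarrow> nat set \<Rightarrow> nat" where
  "cdes \<pi> C = card {c \<in> C. c > \<pi> c}"

definition casc :: "(nat \<Rightarrow> nat) \<Rightarrow> nat set \<Rightarrow> nat" where
  "casc \<pi> C = card {c \<in> C. c < \<pi> c}"

definition cyclic_weight :: "nat \<Rightarrow> (nat \<Rightarrow> nat) \<Rightarrow> nat" where
  "cyclic_weight n \<pi> = (\<Sum>C \<in> cycles_of n \<pi>. min (cdes \<pi> C) (casc \<pi> C))"

definition odd_order :: "nat \<Rightarrow> (nat \<Rightarrow> nat) \<Rightarrow> bool" where
  "odd_order n \<pi> \<longleftrightarrow> (\<forall>C \<in> cycles_of n \<pi>. odd (card C))"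

definition p_count :: "nat \<Rightarrow> nat \<Rightarrow> nat \<Rightarrow> nat \<Rightarrow> nat" where
  "p_count n d i j = card {\<pi>. \<pi> permutes {1..n} \<and> odd_order n \<pi> \<and> cyclic_weight n \<pi> = d
                              \<and> \<pi> i = n \<and> \<pi> n = j}"

end

theory Submission
  imports Defs "HOL-Combinatorics.Cycles"
begin

(* For d = 0 all three numbers vanish: n followed by j < n is a descent, and the cycle
   through 1 and n has both a cyclic ascent and a cyclic descent.

   For d = 1, a permutation word whose only descent is at n consists of two increasing runs.
   With the factor 1 n j this forces j = 2 and the word 1 n 2 3 ... (n-1); with the factor
   j n 1 the word is A j n 1 B with set A an arbitrary subset of {2..j-1}, which gives 2^(j-2)
   words, all of them ballot.

   An odd order permutation of cyclic weight 1 with 1 -> n -> j has exactly one nontrivial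
   cycle. Its cyclic descents at n and at the preimage of 1 leave 1 -> n as its only cyclic
   ascent, so the cycle runs through its elements in decreasing order and is determined by the
   elements strictly between 1 and j, an even-sized subset of {2..j-1}. There is one such
   subset for j = 2 and 2^(j-3) of them for j > 2. *)

definition descent_set :: "nat list \<Rightarrow> nat set" where
  "descent_set ws = {t. Suc t < length ws \<and> ws ! t > ws ! Suc t}"

lemma des_count_eq_card_descent_set: "des_count ws = card (descent_set ws)"
  by (simp add: des_count_def descent_set_def)

lemma finite_descent_set: "finite (descent_set ws)"
  by (rule finite_subset[of _ "{..<length ws}"]) (auto simp: descent_set_def)

lemma descent_set_take_subset: "descent_set (take t ws) \<subseteq> descent_set ws"
  by (auto simp: descent_set_def)

lemma has_factor3_iff: "has_factor3 ws a b c \<longleftrightarrow> (\<exists>A B. ws = A @ a # b # c # B)"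
proof
  assume "has_factor3 ws a b c"
  then obtain t where t: "t + 2 < length ws" "ws ! t = a" "ws ! (t + 1) = b" "ws ! (t + 2) = c"
    unfolding has_factor3_def by blast
  have "drop t ws = ws ! t # ws ! (t + 1) # ws ! (t + 2) # drop (t + 3) ws"
    using t(1) by (simp add: Cons_nth_drop_Suc numeral_3_eq_3)
  then have "drop t ws = a # b # c # drop (t + 3) ws"
    using t by simp
  then have "ws = take t ws @ a # b # c # drop (t + 3) ws"
    by (metis append_take_drop_id)
  then show "\<exists>A B. ws = A @ a # b # c # B" by blast
next
  assume "\<exists>A B. ws = A @ a # b # c # B"
  then obtain A B where "ws = A @ a # b # c # B" by blast
  then show "has_factor3 ws a b c"
    unfolding has_factor3_def by (intro exI[of _ "length A"]) (simp add: nth_append)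
qed

lemma ballot_if_des_count_le_1:
  assumes des: "des_count ws \<le> 1" and first_ascent: "ws ! 0 < ws ! 1"
  shows "ballot ws"
  unfolding ballot_def
proof (intro allI impI)
  fix t assume t: "t \<le> length ws"
  have des_take: "des_count (take t ws) \<le> 1"
    using des card_mono[OF finite_descent_set descent_set_take_subset]
    by (simp add: des_count_eq_card_descent_set) (metis order_trans)
  show "height (take t ws) \<ge> 0"
  proof (cases "t < 2")
    case True
    then have "descent_set (take t ws) = {}" by (auto simp: descent_set_def)
    then show ?thesis by (simp add: height_def des_count_eq_card_descent_set)
  next
    case False
    let ?asc = "{s. Suc s < length (take t ws) \<and> take t ws ! s < take t ws ! Suc s}"
    have "0 \<in> ?asc" using False t first_ascent by auto
    moreover have "finite ?asc" by (rule finite_subset[of _ "{..<t}"]) auto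
    ultimately have "asc_count (take t ws) \<ge> 1"
      unfolding asc_count_def by (metis card_0_eq empty_iff less_one not_le)
    then show ?thesis using des_take by (simp add: height_def)
  qed
qed

lemma sorted_around_unique_descent:
  assumes dist: "distinct (A @ x # y # B)" and des: "des_count (A @ x # y # B) = 1"
    and desc: "y < x"
  shows "sorted_wrt (<) (A @ [x])" "sorted_wrt (<) (y # B)"
proof -
  let ?ws = "A @ x # y # B"
  have "card (descent_set ?ws) = 1" using des by (simp add: des_count_eq_card_descent_set)
  then obtain k where "descent_set ?ws = {k}" by (rule card_1_singletonE)
  moreover have "length A \<in> descent_set ?ws" using desc by (simp add: descent_set_def nth_append)
  ultimately have D: "descent_set ?ws = {length A}" by simp
  have asc: "?ws ! s < ?ws ! Suc s" if "Suc s < length ?ws" "s \<noteq> length A" for s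
  proof -
    have "?ws ! s \<noteq> ?ws ! Suc s" using dist that(1) by (simp add: nth_eq_iff_index_eq)
    moreover have "s \<notin> descent_set ?ws" using D that(2) by simp
    ultimately show ?thesis using that(1) by (auto simp: descent_set_def)
  qed
  let ?k = "Suc (length A)"
  have "\<forall>i. Suc i < length (take ?k ?ws) \<longrightarrow> take ?k ?ws ! i < take ?k ?ws ! Suc i"
  proof (intro allI impI)
    fix i assume i: "Suc i < length (take ?k ?ws)"
    then have "Suc i < ?k" by simp
    moreover have "?ws ! i < ?ws ! Suc i" using i by (intro asc) auto
    ultimately show "take ?k ?ws ! i < take ?k ?ws ! Suc i" by (metis Suc_lessD nth_take)
  qed
  then show "sorted_wrt (<) (A @ [x])" by (simp add: sorted_wrt_iff_nth_Suc_transp)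
  have "\<forall>i. Suc i < length (drop ?k ?ws) \<longrightarrow> drop ?k ?ws ! i < drop ?k ?ws ! Suc i"
  proof (intro allI impI)
    fix i assume i: "Suc i < length (drop ?k ?ws)"
    then have "?ws ! (?k + i) < ?ws ! Suc (?k + i)" by (intro asc) auto
    moreover have "drop ?k ?ws ! i = ?ws ! (?k + i)" "drop ?k ?ws ! Suc i = ?ws ! Suc (?k + i)"
      using nth_drop[of ?k ?ws i] nth_drop[of ?k ?ws "Suc i"] by simp_all
    ultimately show "drop ?k ?ws ! i < drop ?k ?ws ! Suc i" by simp
  qed
  then have "sorted_wrt (<) (drop ?k ?ws)"
    by (simp only: sorted_wrt_iff_nth_Suc_transp[OF transp_on_less])
  then show "sorted_wrt (<) (y # B)" by simp
qed

lemma descent_set_append_sorted: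
  assumes P: "sorted_wrt (<) P" and Q: "sorted_wrt (<) Q"
  shows "descent_set (P @ Q) \<subseteq> {length P - 1}"
proof
  fix t assume t: "t \<in> descent_set (P @ Q)"
  show "t \<in> {length P - 1}"
  proof (rule ccontr)
    assume "t \<notin> {length P - 1}"
    then consider "Suc t < length P" | "length P \<le> t" by fastforce
    then have "(P @ Q) ! t < (P @ Q) ! Suc t"
    proof cases
      case 1
      then show ?thesis using sorted_wrt_nth_less[OF P] by (simp add: nth_append)
    next
      case 2
      then have "Suc (t - length P) < length Q" using t by (auto simp: descent_set_def)
      then have "Q ! (t - length P) < Q ! Suc (t - length P)"
        by (intro sorted_wrt_nth_less[OF Q]) auto
      then show ?thesis using 2 by (simp add: nth_append Suc_diff_le)
    qed
    then show False using t by (simp add: descent_set_def)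
  qed
qed

lemma ballot_single_descent_append:
  assumes P: "sorted_wrt (<) P" and Q: "sorted_wrt (<) Q" and lenP: "2 \<le> length P"
    and Q_ne: "Q \<noteq> []" and drop: "last P > hd Q"
  shows "ballot (P @ Q)" "des_count (P @ Q) = 1"
proof -
  have "P \<noteq> []" using lenP by auto
  then have "(P @ Q) ! (length P - 1) = last P" "(P @ Q) ! Suc (length P - 1) = hd Q"
    using Q_ne by (simp_all add: nth_append last_conv_nth hd_conv_nth)
  moreover have "Suc (length P - 1) < length (P @ Q)" using lenP Q_ne by (cases Q) auto
  ultimately have "length P - 1 \<in> descent_set (P @ Q)"
    using drop by (simp add: descent_set_def)
  then have "descent_set (P @ Q) = {length P - 1}"
    using descent_set_append_sorted[OF P Q] by blast
  then show des: "des_count (P @ Q) = 1" by (simp add: des_count_eq_card_descent_set)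
  have "(P @ Q) ! 0 = P ! 0" "(P @ Q) ! 1 = P ! 1" using lenP by (auto simp: nth_append)
  then have "(P @ Q) ! 0 < (P @ Q) ! 1"
    using sorted_wrt_nth_less[OF P, of 0 1] lenP by simp
  then show "ballot (P @ Q)" using des by (intro ballot_if_des_count_le_1) simp_all
qed

lemma b_count_0_eq_0:
  assumes "c < n"
  shows "b_count n 0 a c = 0"
proof -
  have "des_count ws \<noteq> 0" if fac: "has_factor3 ws a n c" for ws
  proof -
    obtain A B where ws: "ws = A @ a # n # c # B" using fac by (auto simp: has_factor3_iff)
    then have "Suc (length A) \<in> descent_set ws"
      using assms by (simp add: descent_set_def nth_append)
    then show ?thesis using finite_descent_set[of ws] by (auto simp: des_count_eq_card_descent_set)
  qed
  then have "{ws. is_perm_word n ws \<and> ballot ws \<and> des_count ws = 0 \<and> has_factor3 ws a n c} = {}"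
    by blast
  then show ?thesis unfolding b_count_def by (simp only: card.empty)
qed

lemma perm_word_elem_ge_1: "is_perm_word n ws \<Longrightarrow> x \<in> set ws \<Longrightarrow> 1 \<le> x"
  by (auto simp: is_perm_word_def)

lemma sorted_list_of_set_set_strict: "sorted_wrt (<) xs \<Longrightarrow> sorted_list_of_set (set xs) = xs"
  by (rule strict_sorted_equal) (simp_all add: strict_sorted_list_of_set)

lemma b_count_1_1_j:
  assumes n: "3 \<le> n" and j: "2 \<le> j" "j < n"
  shows "b_count n 1 1 j = (if j = 2 then 1 else 0)"
proof -
  let ?W = "{ws. is_perm_word n ws \<and> ballot ws \<and> des_count ws = 1 \<and> has_factor3 ws 1 n j}"
  let ?w = "[1, n] @ [2..<n]"
  have unique: "ws = ?w \<and> j = 2" if ws: "ws \<in> ?W" for ws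
  proof -
    obtain A B where ws_eq: "ws = A @ 1 # n # j # B" using ws by (auto simp: has_factor3_iff)
    have pw: "is_perm_word n ws" and "des_count ws = 1" using ws by auto
    then have dist: "distinct ((A @ [1]) @ n # j # B)"
      and des': "des_count ((A @ [1]) @ n # j # B) = 1"
      using ws_eq by (simp_all add: is_perm_word_def)
    have "sorted_wrt (<) (A @ [1, n])"
      using sorted_around_unique_descent(1)[OF dist des'] j by simp
    then have "\<forall>x\<in>set A. x < 1" by (simp add: sorted_wrt_append)
    moreover have "\<forall>x\<in>set A. 1 \<le> x" using perm_word_elem_ge_1[OF pw] ws_eq by simp
    ultimately have A: "A = []" by (cases A) auto
    have sorted_jB: "sorted_wrt (<) (j # B)"
      using sorted_around_unique_descent(2)[OF dist des'] j by simp
    have "set (j # B) = {1..n} - {1, n}"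
      using pw dist unfolding ws_eq A is_perm_word_def by auto
    also have "\<dots> = {2..<n}" by auto
    finally have "j # B = [2..<n]"
      using sorted_jB by (intro strict_sorted_equal) simp_all
    then have "j = 2" "B = [3..<n]" using n by (simp_all add: upt_rec)
    then show ?thesis using ws_eq A n by (simp add: upt_rec)
  qed
  have w_in: "?w \<in> ?W" if "j = 2"
  proof -
    have "is_perm_word n ?w" using n by (auto simp: is_perm_word_def)
    moreover have "ballot ?w" "des_count ?w = 1"
      using n by (intro ballot_single_descent_append; simp)+
    moreover have "?w = [] @ 1 # n # j # [3..<n]" using n that by (simp add: upt_rec)
    ultimately show ?thesis unfolding has_factor3_iff by blast
  qed
  have "?W = (if j = 2 then {?w} else {})" using unique w_in by auto
  then show ?thesis unfolding b_count_def by simp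
qed

definition word_jn1 :: "nat \<Rightarrow> nat \<Rightarrow> nat set \<Rightarrow> nat list" where
  "word_jn1 n j S = sorted_list_of_set S @ j # n # 1 # sorted_list_of_set ({2..<n} - insert j S)"

lemma word_jn1_in_b_count:
  assumes n: "3 \<le> n" and j: "2 \<le> j" "j < n" and S: "S \<subseteq> {2..<j}"
  shows "is_perm_word n (word_jn1 n j S) \<and> ballot (word_jn1 n j S)
    \<and> des_count (word_jn1 n j S) = 1 \<and> has_factor3 (word_jn1 n j S) j n 1"
proof -
  let ?P = "sorted_list_of_set S @ [j, n]" and ?Q = "1 # sorted_list_of_set ({2..<n} - insert j S)"
  have fin: "finite S" using S by (rule finite_subset) simp
  have w: "word_jn1 n j S = ?P @ ?Q" by (simp add: word_jn1_def)
  have "is_perm_word n (word_jn1 n j S)"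
    using fin S j n unfolding word_jn1_def is_perm_word_def by auto
  moreover have "sorted_wrt (<) ?P" using fin S j by (auto simp: sorted_wrt_append)
  then have "ballot (?P @ ?Q)" "des_count (?P @ ?Q) = 1"
    using n by (intro ballot_single_descent_append; simp)+
  moreover have "has_factor3 (word_jn1 n j S) j n 1"
    unfolding has_factor3_iff word_jn1_def by blast
  ultimately show ?thesis using w by simp
qed

lemma ex_word_jn1_eq:
  assumes pw: "is_perm_word n ws" and des: "des_count ws = 1" and fac: "has_factor3 ws j n 1"
    and n: "1 < n"
  shows "\<exists>S \<subseteq> {2..<j}. ws = word_jn1 n j S"
proof -
  obtain A B where ws: "ws = A @ j # n # 1 # B" using fac by (auto simp: has_factor3_iff)
  then have dist: "distinct ((A @ [j]) @ n # 1 # B)"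
      and des': "des_count ((A @ [j]) @ n # 1 # B) = 1"
    using pw des by (simp_all add: is_perm_word_def)
  have sorted_A: "sorted_wrt (<) A" and A_less: "\<forall>x\<in>set A. x < j"
    using sorted_around_unique_descent(1)[OF dist des'] n by (simp_all add: sorted_wrt_append)
  have sorted_B: "sorted_wrt (<) B"
    using sorted_around_unique_descent(2)[OF dist des'] n by simp
  have A_sub: "set A \<subseteq> {2..<j}"
  proof
    fix x assume x: "x \<in> set A"
    then have "1 \<le> x" "x \<noteq> 1" using perm_word_elem_ge_1[OF pw] dist ws by auto
    then show "x \<in> {2..<j}" using A_less x by auto
  qed
  have "set B = {1..n} - insert j (insert n (insert 1 (set A)))"
    using pw dist unfolding ws is_perm_word_def by auto
  also have "\<dots> = {2..<n} - insert j (set A)" by auto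
  finally have "sorted_list_of_set ({2..<n} - insert j (set A)) = B"
    using sorted_list_of_set_set_strict[OF sorted_B] by simp
  then have "ws = word_jn1 n j (set A)"
    using ws sorted_list_of_set_set_strict[OF sorted_A] unfolding word_jn1_def by simp
  then show ?thesis using A_sub by blast
qed

lemma inj_on_word_jn1: "inj_on (word_jn1 n j) (Pow {2..<j})"
proof (rule inj_onI)
  fix S T assume S: "S \<in> Pow {2..<j}" and T: "T \<in> Pow {2..<j}" and eq: "word_jn1 n j S = word_jn1 n j T"
  have prefix: "takeWhile (\<lambda>x. x \<noteq> j) (word_jn1 n j U) = sorted_list_of_set U"
    if "U \<in> Pow {2..<j}" for U
  proof -
    have "finite U" "j \<notin> U" using that by (auto intro: finite_subset)
    then show ?thesis unfolding word_jn1_def by (subst takeWhile_append) auto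
  qed
  have "finite S" "finite T" using S T by (auto intro: finite_subset)
  then show "S = T"
    using prefix[OF S] prefix[OF T] eq by (simp add: sorted_list_of_set_inject)
qed

lemma b_count_1_j_1:
  assumes n: "3 \<le> n" and j: "2 \<le> j" "j < n"
  shows "b_count n 1 j 1 = 2 ^ (j - 2)"
proof -
  have "{ws. is_perm_word n ws \<and> ballot ws \<and> des_count ws = 1 \<and> has_factor3 ws j n 1}
      = word_jn1 n j ` Pow {2..<j}"
  proof (intro set_eqI iffI)
    fix ws assume "ws \<in> {ws. is_perm_word n ws \<and> ballot ws \<and> des_count ws = 1 \<and> has_factor3 ws j n 1}"
    then show "ws \<in> word_jn1 n j ` Pow {2..<j}" using ex_word_jn1_eq n by fastforce
  next
    fix ws assume "ws \<in> word_jn1 n j ` Pow {2..<j}"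
    then show "ws \<in> {ws. is_perm_word n ws \<and> ballot ws \<and> des_count ws = 1 \<and> has_factor3 ws j n 1}"
      using word_jn1_in_b_count[OF assms] by blast
  qed
  then have "b_count n 1 j 1 = card (word_jn1 n j ` Pow {2..<j})" by (simp add: b_count_def)
  also have "\<dots> = 2 ^ (j - 2)" by (simp add: card_image[OF inj_on_word_jn1] card_Pow)
  finally show ?thesis .
qed

lemma cycle_of_subset:
  assumes "\<pi> permutes U" "x \<in> U"
  shows "cycle_of \<pi> x \<subseteq> U"
proof
  fix y assume "y \<in> cycle_of \<pi> x"
  then obtain k where "y = (\<pi> ^^ k) x" unfolding cycle_of_def by blast
  then show "y \<in> U" using permutes_in_image[OF permutes_funpow[OF assms(1)]] assms(2) by simp
qed

lemma finite_cycle_of: "\<pi> permutes U \<Longrightarrow> finite U \<Longrightarrow> x \<in> U \<Longrightarrow> finite (cycle_of \<pi> x)"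
  by (rule finite_subset[OF cycle_of_subset])

lemma self_in_cycle_of: "x \<in> cycle_of \<pi> x"
  unfolding cycle_of_def by (auto intro: exI[of _ 0])

lemma cycle_of_closed: "c \<in> cycle_of \<pi> x \<Longrightarrow> \<pi> c \<in> cycle_of \<pi> x"
proof -
  assume "c \<in> cycle_of \<pi> x"
  then obtain k where "c = (\<pi> ^^ k) x" unfolding cycle_of_def by blast
  then have "\<pi> c = (\<pi> ^^ Suc k) x" by simp
  then show ?thesis unfolding cycle_of_def by blast
qed

lemma image_cycle_of:
  assumes "\<pi> permutes U" "finite U" "x \<in> U"
  shows "\<pi> ` cycle_of \<pi> x = cycle_of \<pi> x"
  by (rule endo_inj_surj)
    (use assms finite_cycle_of cycle_of_closed permutes_inj_on in auto)

lemma cycle_of_fixpoint: "\<pi> x = x \<Longrightarrow> cycle_of \<pi> x = {x}"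
proof -
  assume fixed: "\<pi> x = x"
  have "(\<pi> ^^ k) x = x" for k by (induction k) (simp_all add: fixed)
  then show ?thesis unfolding cycle_of_def by auto
qed

lemma fixpoint_in_cycle_of:
  assumes inj: "inj \<pi>" and c: "c \<in> cycle_of \<pi> x" and fixed: "\<pi> c = c"
  shows "\<pi> x = x"
proof -
  obtain k where "c = (\<pi> ^^ k) x" using c unfolding cycle_of_def by blast
  with fixed have "\<pi> ((\<pi> ^^ k) x) = (\<pi> ^^ k) x" by simp
  then show ?thesis by (induction k) (auto simp: inj_eq[OF inj])
qed

(* As \<pi> permutes C, the sums of c and of \<pi> c over C agree, so \<pi> cannot move the points
   of C only upwards or only downwards. *)
lemma casc_cdes_pos:
  assumes fin: "finite C" and im: "\<pi> ` C = C" and inj: "inj_on \<pi> C"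
    and c: "c \<in> C" "\<pi> c \<noteq> c"
  shows "1 \<le> casc \<pi> C" "1 \<le> cdes \<pi> C"
proof -
  have sum_eq: "(\<Sum>c\<in>C. \<pi> c) = (\<Sum>c\<in>C. c)"
    using sum.reindex[OF inj, of id] im by simp
  show "1 \<le> casc \<pi> C"
  proof (rule ccontr)
    assume "\<not> 1 \<le> casc \<pi> C"
    then have "card {c \<in> C. c < \<pi> c} = 0" by (simp add: casc_def)
    then have "\<forall>c\<in>C. \<pi> c \<le> c" using fin by (auto simp: card_eq_0_iff)
    then have "(\<Sum>c\<in>C. \<pi> c) < (\<Sum>c\<in>C. c)"
      using fin c by (intro sum_strict_mono_ex1) (auto intro: le_neq_implies_less)
    then show False using sum_eq by simp
  qed
  show "1 \<le> cdes \<pi> C"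
  proof (rule ccontr)
    assume "\<not> 1 \<le> cdes \<pi> C"
    then have "card {c \<in> C. c > \<pi> c} = 0" by (simp add: cdes_def)
    then have "\<forall>c\<in>C. c \<le> \<pi> c" using fin by (auto simp: card_eq_0_iff)
    then have "(\<Sum>c\<in>C. c) < (\<Sum>c\<in>C. \<pi> c)"
      using fin c not_sym[OF c(2)] by (intro sum_strict_mono_ex1) (auto simp: order_less_le)
    then show False using sum_eq by simp
  qed
qed

lemma cycle_weight_pos:
  assumes "\<pi> permutes {1..n}" "x \<in> {1..n}" "\<pi> x \<noteq> x"
  shows "1 \<le> min (cdes \<pi> (cycle_of \<pi> x)) (casc \<pi> (cycle_of \<pi> x))"
  using casc_cdes_pos[OF finite_cycle_of[OF assms(1) _ assms(2)] image_cycle_of[OF assms(1) _ assms(2)]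
      _ self_in_cycle_of assms(3)] permutes_inj_on[OF assms(1)]
  by simp

lemma cycle_weight_le_cyclic_weight:
  "x \<in> {1..n} \<Longrightarrow> min (cdes \<pi> (cycle_of \<pi> x)) (casc \<pi> (cycle_of \<pi> x)) \<le> cyclic_weight n \<pi>"
  unfolding cyclic_weight_def cycles_of_def by (rule member_le_sum) auto

lemma p_count_0_eq_0:
  assumes "i \<in> {1..n}" "i \<noteq> n"
  shows "p_count n 0 i j = 0"
proof -
  have "cyclic_weight n \<pi> \<noteq> 0" if "\<pi> permutes {1..n}" "\<pi> i = n" for \<pi>
    using cycle_weight_pos[OF that(1) assms(1)] cycle_weight_le_cyclic_weight[OF assms(1), of \<pi>]
      that(2) assms(2) by linarith
  then have "{\<pi>. \<pi> permutes {1..n} \<and> odd_order n \<pi> \<and> cyclic_weight n \<pi> = 0 \<and> \<pi> i = n \<and> \<pi> n = j} = {}"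
    by blast
  then show ?thesis unfolding p_count_def by (simp only: card.empty)
qed

lemma cyclic_weight_single_cycle:
  assumes C: "C \<subseteq> {1..n}" "C \<noteq> {}" and cyc: "\<And>y. y \<in> C \<Longrightarrow> cycle_of \<pi> y = C"
    and fixed: "\<And>y. y \<notin> C \<Longrightarrow> \<pi> y = y"
  shows "cyclic_weight n \<pi> = min (cdes \<pi> C) (casc \<pi> C)" "odd_order n \<pi> \<longleftrightarrow> odd (card C)"
proof -
  have cycles: "D = C \<or> (\<exists>y. D = {y} \<and> \<pi> y = y)" if D: "D \<in> cycles_of n \<pi>" for D
  proof -
    obtain y where "D = cycle_of \<pi> y" using D unfolding cycles_of_def by blast
    then show ?thesis using cyc fixed cycle_of_fixpoint by (cases "y \<in> C") auto
  qed
  have C_in: "C \<in> cycles_of n \<pi>" using C cyc unfolding cycles_of_def by blast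
  have "min (cdes \<pi> D) (casc \<pi> D) = 0" if D: "D \<in> cycles_of n \<pi> - {C}" for D
  proof -
    obtain y where "D = {y}" "\<pi> y = y" using cycles D by blast
    then have "{c \<in> D. c > \<pi> c} = {}" by auto
    then have "cdes \<pi> D = 0" unfolding cdes_def by (simp only: card.empty)
    then show ?thesis by simp
  qed
  then show "cyclic_weight n \<pi> = min (cdes \<pi> C) (casc \<pi> C)"
    unfolding cyclic_weight_def using C_in by (simp add: sum.remove[of _ C] cycles_of_def)
  show "odd_order n \<pi> \<longleftrightarrow> odd (card C)"
    unfolding odd_order_def using cycles C_in by fastforce
qed

lemma cyclic_weight_1_single_cycle:
  assumes p: "\<pi> permutes {1..n}" and w: "cyclic_weight n \<pi> = 1"
    and x: "x \<in> {1..n}" "\<pi> x \<noteq> x"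
  shows "min (cdes \<pi> (cycle_of \<pi> x)) (casc \<pi> (cycle_of \<pi> x)) = 1"
    and "y \<notin> cycle_of \<pi> x \<Longrightarrow> \<pi> y = y"
proof -
  let ?wt = "\<lambda>D. min (cdes \<pi> D) (casc \<pi> D)"
  show wx: "?wt (cycle_of \<pi> x) = 1"
    using cycle_weight_pos[OF p x] cycle_weight_le_cyclic_weight[OF x(1), of \<pi>] w by linarith
  assume y: "y \<notin> cycle_of \<pi> x"
  show "\<pi> y = y"
  proof (rule ccontr)
    assume moved: "\<pi> y \<noteq> y"
    then have y_in: "y \<in> {1..n}" using permutes_not_in[OF p] by blast
    have ne: "cycle_of \<pi> y \<noteq> cycle_of \<pi> x" using y self_in_cycle_of by metis
    have "?wt (cycle_of \<pi> x) + ?wt (cycle_of \<pi> y) = sum ?wt {cycle_of \<pi> x, cycle_of \<pi> y}"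
      using ne by simp
    also have "\<dots> \<le> cyclic_weight n \<pi>"
      unfolding cyclic_weight_def cycles_of_def using x(1) y_in by (intro sum_mono2) auto
    finally show False using wx cycle_weight_pos[OF p y_in moved] w by linarith
  qed
qed

(* Each element of C goes to the next smaller one, and Min C goes to Max C. *)
definition down_cycle :: "'a::linorder set \<Rightarrow> 'a \<Rightarrow> 'a" where
  "down_cycle C = cycle_of_list (rev (sorted_list_of_set C))"

lemma permutes_down_cycle: "finite C \<Longrightarrow> down_cycle C permutes C"
  using cycle_permutes[of "rev (sorted_list_of_set C)"] by (simp add: down_cycle_def)

lemma funpow_down_cycle:
  assumes "finite C" "i < card C"
  shows "(down_cycle C ^^ k) (rev (sorted_list_of_set C) ! i)
    = rev (sorted_list_of_set C) ! ((k + i) mod card C)"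
proof -
  let ?L = "rev (sorted_list_of_set C)"
  have "map (down_cycle C ^^ k) ?L ! i = rotate k ?L ! i"
    unfolding down_cycle_def by (subst cyclic_rotation) simp_all
  then show ?thesis using assms by (simp add: nth_rotate)
qed

lemma rev_sorted_list_of_set_less:
  assumes "finite C" "i < k" "k < card C"
  shows "rev (sorted_list_of_set C) ! k < rev (sorted_list_of_set C) ! i"
proof -
  have "sorted_wrt (>) (rev (sorted_list_of_set C))"
    by (simp add: sorted_wrt_rev strict_sorted_list_of_set)
  then show ?thesis using assms by (auto dest: sorted_wrt_nth_less)
qed

lemma rev_sorted_list_of_set_Max_Min:
  assumes fin: "finite C" and ne: "C \<noteq> {}"
  shows "rev (sorted_list_of_set C) ! 0 = Max C" "rev (sorted_list_of_set C) ! (card C - 1) = Min C"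
proof -
  let ?L = "rev (sorted_list_of_set C)"
  have l: "0 < card C" using fin ne by (simp add: card_gt_0_iff)
  have in_C: "?L ! i \<in> C" if "i < card C" for i
    using that fin nth_mem[of i ?L] by simp
  have ex: "\<exists>i<card C. ?L ! i = c" if "c \<in> C" for c
    using that fin by (metis in_set_conv_nth length_rev length_sorted_list_of_set set_rev
        set_sorted_list_of_set)
  have le: "?L ! k \<le> ?L ! i" if "i \<le> k" "k < card C" for i k
    using rev_sorted_list_of_set_less[OF fin, of i k] that by (cases "i = k") auto
  have "c \<le> ?L ! 0" "?L ! (card C - 1) \<le> c" if c: "c \<in> C" for c
  proof -
    obtain i where "i < card C" "?L ! i = c" using ex[OF c] by blast
    then show "c \<le> ?L ! 0" "?L ! (card C - 1) \<le> c" using le[of 0 i] le[of i "card C - 1"] by auto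
  qed
  then show "?L ! 0 = Max C" "?L ! (card C - 1) = Min C"
    using fin l in_C by (auto intro: Max_eqI[symmetric] Min_eqI[symmetric])
qed

lemma down_cycle_Min: "finite C \<Longrightarrow> C \<noteq> {} \<Longrightarrow> down_cycle C (Min C) = Max C"
  using funpow_down_cycle[of C "card C - 1" 1] rev_sorted_list_of_set_Max_Min[of C]
  by (simp add: card_gt_0_iff)

lemma down_cycle_less:
  assumes fin: "finite C" and c: "c \<in> C" "c \<noteq> Min C"
  shows "down_cycle C c < c"
proof -
  let ?L = "rev (sorted_list_of_set C)"
  obtain i where i: "i < card C" "?L ! i = c"
    using c fin by (metis in_set_conv_nth length_rev length_sorted_list_of_set set_rev
        set_sorted_list_of_set)
  have "i \<noteq> card C - 1" using i c rev_sorted_list_of_set_Max_Min(2)[OF fin] by auto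
  then have "Suc i < card C" using i by simp
  then have "down_cycle C c = ?L ! Suc i" using funpow_down_cycle[OF fin i(1), of 1] i by simp
  also have "\<dots> < c" using rev_sorted_list_of_set_less[OF fin lessI \<open>Suc i < card C\<close>] i(2) by simp
  finally show ?thesis .
qed

lemma cycle_of_down_cycle:
  assumes fin: "finite C" and x: "x \<in> C"
  shows "cycle_of (down_cycle C) x = C"
proof -
  let ?L = "rev (sorted_list_of_set C)"
  have ex: "\<exists>i<card C. ?L ! i = c" if "c \<in> C" for c
    using that fin by (metis in_set_conv_nth length_rev length_sorted_list_of_set set_rev
        set_sorted_list_of_set)
  obtain i where i: "i < card C" "?L ! i = x" using ex[OF x] by blast
  show ?thesis
  proof
    show "cycle_of (down_cycle C) x \<subseteq> C"
      using cycle_of_subset[OF permutes_down_cycle[OF fin] x] .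
    show "C \<subseteq> cycle_of (down_cycle C) x"
    proof
      fix y assume "y \<in> C"
      then obtain m where m: "m < card C" "?L ! m = y" using ex by blast
      have "(down_cycle C ^^ (m + card C - i)) x = ?L ! ((m + card C - i + i) mod card C)"
        using funpow_down_cycle[OF fin i(1)] i(2) by simp
      also have "(m + card C - i + i) mod card C = m" using i m by simp
      finally have "y = (down_cycle C ^^ (m + card C - i)) x" using m(2) by simp
      then show "y \<in> cycle_of (down_cycle C) x" unfolding cycle_of_def by blast
    qed
  qed
qed

lemma casc_cdes_down_cycle:
  assumes fin: "finite C" and two: "2 \<le> card C"
  shows "casc (down_cycle C) C = 1" "cdes (down_cycle C) C = card C - 1"
proof -
  have ne: "C \<noteq> {}" using two by auto
  have "Min C \<noteq> Max C"
  proof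
    assume eq: "Min C = Max C"
    have "c = Min C" if "c \<in> C" for c
      using Min_le[OF fin that] Max_ge[OF fin that] eq by simp
    then have "C \<subseteq> {Min C}" by blast
    then show False using two card_mono[OF _ \<open>C \<subseteq> {Min C}\<close>] by simp
  qed
  then have Min_asc: "Min C < down_cycle C (Min C)"
    using down_cycle_Min[OF fin ne] Max_ge[OF fin Min_in[OF fin ne]] by (simp add: order_less_le)
  note less = down_cycle_less[OF fin]
  have "{c \<in> C. c < down_cycle C c} = {Min C}"
    using Min_asc Min_in[OF fin ne] less by (auto dest: less_asym)
  then show "casc (down_cycle C) C = 1" by (simp add: casc_def)
  have "{c \<in> C. c > down_cycle C c} = C - {Min C}"
    using Min_asc less by (auto dest: less_asym)
  then show "cdes (down_cycle C) C = card C - 1" using fin ne Min_in[OF fin ne] by (simp add: cdes_def)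
qed

(* f maps {y \<in> C. Min C < y \<le> x} injectively into the equally large set {y \<in> C. y < x},
   hence onto it; only x can be the preimage of the maximum, as f moves every other
   candidate below itself. *)
lemma decreasing_perm_eq_Max_less:
  fixes f :: "'a::linorder \<Rightarrow> 'a"
  assumes fin: "finite C" and im: "f ` C \<subseteq> C" and inj: "inj_on f C"
    and dec: "\<And>c. c \<in> C \<Longrightarrow> c \<noteq> Min C \<Longrightarrow> f c < c"
    and x: "x \<in> C" "x \<noteq> Min C"
  shows "f x = Max {y \<in> C. y < x}"
proof -
  define D where "D = {y \<in> C. Min C < y \<and> y \<le> x}"
  define E where "E = {y \<in> C. y < x}"
  have fin_DE: "finite D" "finite E" using fin by (auto simp: D_def E_def)
  have Min_x: "Min C < x" using Min_le[OF fin x(1)] x(2) by simp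
  have "f ` D \<subseteq> E"
  proof
    fix z assume "z \<in> f ` D"
    then obtain y where "y \<in> D" "z = f y" by blast
    then show "z \<in> E" using dec[of y] im by (force simp: D_def E_def)
  qed
  moreover have "card D = card E"
  proof -
    have "insert (Min C) D = insert x E"
      using Min_x x Min_in[OF fin] Min_le[OF fin] by (auto simp: D_def E_def order_less_le)
    moreover have "Min C \<notin> D" "x \<notin> E" by (auto simp: D_def E_def)
    ultimately show ?thesis using fin_DE by (metis card_insert_disjoint diff_Suc_1)
  qed
  moreover have "card (f ` D) = card D"
    using inj by (intro card_image) (auto simp: D_def intro: inj_on_subset)
  ultimately have fD: "f ` D = E" using fin_DE by (metis card_subset_eq)
  have "Min C \<in> E" using Min_x Min_in[OF fin] x by (auto simp: E_def)
  then have "Max E \<in> E" using fin_DE by (intro Max_in) auto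
  then obtain y where y: "y \<in> D" "f y = Max E" using fD by (metis imageE)
  have "y = x"
  proof (rule ccontr)
    assume "y \<noteq> x"
    then have "y \<in> E" using y by (auto simp: D_def E_def)
    then have "y \<le> Max E" using fin_DE by simp
    moreover have "f y < y" using dec[of y] y(1) by (auto simp: D_def)
    ultimately show False using y by simp
  qed
  then show ?thesis using y by (simp add: E_def)
qed

lemma down_cycle_eq_Max_less:
  assumes fin: "finite C" and x: "x \<in> C" "x \<noteq> Min C"
  shows "down_cycle C x = Max {y \<in> C. y < x}"
  using decreasing_perm_eq_Max_less[OF fin _ permutes_inj_on[OF permutes_down_cycle[OF fin]]
      down_cycle_less[OF fin] x] permutes_image[OF permutes_down_cycle[OF fin]]
  by simp

lemma eq_if_eq_off_point:
  assumes inj: "inj \<sigma>" and surj: "surj \<tau>" and eq: "\<And>x. x \<noteq> a \<Longrightarrow> \<sigma> x = \<tau> x"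
  shows "\<sigma> = \<tau>"
proof
  fix x
  show "\<sigma> x = \<tau> x"
  proof (rule ccontr)
    assume ne: "\<sigma> x \<noteq> \<tau> x"
    then have x: "x = a" using eq by blast
    obtain b where b: "\<tau> b = \<sigma> a" using surj by (metis surjD)
    then have "b \<noteq> a" using ne x by auto
    then have "\<sigma> b = \<sigma> a" using eq b by simp
    then show False using inj \<open>b \<noteq> a\<close> by (simp add: inj_eq)
  qed
qed

lemma eq_down_cycle_if_decreasing:
  assumes p: "\<pi> permutes C" and fin: "finite C"
    and dec: "\<And>c. c \<in> C \<Longrightarrow> c \<noteq> Min C \<Longrightarrow> \<pi> c < c"
  shows "\<pi> = down_cycle C"
proof (rule eq_if_eq_off_point[of \<pi> "down_cycle C" "Min C"])
  have down: "down_cycle C permutes C" using permutes_down_cycle[OF fin] .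
  show "inj \<pi>" using permutes_inj[OF p] .
  show "surj (down_cycle C)" using permutes_surj[OF down] .
  fix x assume x: "x \<noteq> Min C"
  show "\<pi> x = down_cycle C x"
  proof (cases "x \<in> C")
    case True
    have "\<pi> x = Max {y \<in> C. y < x}"
      using decreasing_perm_eq_Max_less[OF fin _ permutes_inj_on[OF p] dec True x]
        permutes_image[OF p] by simp
    also have "\<dots> = down_cycle C x" using down_cycle_eq_Max_less[OF fin True x] by simp
    finally show ?thesis .
  next
    case False
    then show ?thesis using permutes_not_in[OF p] permutes_not_in[OF down] by simp
  qed
qed

lemma decreasing_if_casc_1:
  assumes fin: "finite C" and im: "\<pi> ` C = C" and casc: "casc \<pi> C = 1"
    and moved: "\<And>c. c \<in> C \<Longrightarrow> \<pi> c \<noteq> c"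
    and c: "c \<in> C" "c \<noteq> Min C"
  shows "\<pi> c < c"
proof -
  have ne: "C \<noteq> {}" using c by blast
  have "\<pi> (Min C) \<in> C" using im Min_in[OF fin ne] by blast
  then have "Min C < \<pi> (Min C)"
    using Min_le[OF fin] moved[OF Min_in[OF fin ne]] by (simp add: order_less_le)
  then have "Min C \<in> {c \<in> C. c < \<pi> c}" using Min_in[OF fin ne] by simp
  moreover obtain a where "{c \<in> C. c < \<pi> c} = {a}"
    using casc unfolding casc_def by (rule card_1_singletonE)
  ultimately have "{c \<in> C. c < \<pi> c} = {Min C}" by simp
  then have "\<not> c < \<pi> c" using c by blast
  then show ?thesis using moved[OF c(1)] by simp
qed

lemma card_1_n_j_Un:
  fixes j n :: nat
  assumes "1 < j" "j < n" "S \<subseteq> {2..<j}"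
  shows "card ({1, n, j} \<union> S) = 3 + card S"
proof -
  have "finite S" using assms(3) by (rule finite_subset) simp
  moreover have "{1, n, j} \<inter> S = {}" using assms by auto
  ultimately have "card ({1, n, j} \<union> S) = card {1, n, j} + card S" by (intro card_Un_disjoint) auto
  then show ?thesis using assms(1,2) by simp
qed

lemma down_cycle_in_p_count_set:
  assumes n: "3 \<le> n" and j: "2 \<le> j" "j < n" and S: "S \<subseteq> {2..<j}" and ev: "even (card S)"
  shows "down_cycle ({1, n, j} \<union> S)
    \<in> {\<pi>. \<pi> permutes {1..n} \<and> odd_order n \<pi> \<and> cyclic_weight n \<pi> = 1 \<and> \<pi> 1 = n \<and> \<pi> n = j}"
proof -
  define C where "C = {1, n, j} \<union> S"
  have fin: "finite C" using S unfolding C_def by (auto intro: finite_subset)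
  have sub: "C \<subseteq> {1..n}" and ne: "C \<noteq> {}" and nC: "n \<in> C" using S j unfolding C_def by auto
  have Min: "Min C = 1" using fin sub by (intro Min_eqI) (auto simp: C_def)
  have Max: "Max C = n" using fin sub by (intro Max_eqI) (auto simp: C_def)
  have below_n: "{y \<in> C. y < n} = insert j (insert 1 S)" using S j unfolding C_def by auto
  have card: "card C = 3 + card S" unfolding C_def using j S by (intro card_1_n_j_Un) auto
  have down: "down_cycle C permutes C" using permutes_down_cycle[OF fin] .
  note single = cyclic_weight_single_cycle[OF sub ne cycle_of_down_cycle[OF fin] permutes_not_in[OF down]]
  have "cyclic_weight n (down_cycle C) = 1"
    using single(1) casc_cdes_down_cycle[OF fin] card by simp
  moreover have "odd_order n (down_cycle C)" using single(2) card ev by simp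
  moreover have "down_cycle C 1 = n" using down_cycle_Min[OF fin ne] Min Max by simp
  moreover have "n \<noteq> Min C" using n Min by simp
  then have "down_cycle C n = Max {y \<in> C. y < n}" by (rule down_cycle_eq_Max_less[OF fin nC])
  moreover have "Max {y \<in> C. y < n} = j"
    unfolding below_n using S j by (intro Max_eqI) (auto intro: finite_subset)
  ultimately show ?thesis using permutes_subset[OF down sub] unfolding C_def by simp
qed

lemma weight_1_perm_eq_down_cycle:
  assumes p: "\<pi> permutes {1..n}" and w: "cyclic_weight n \<pi> = 1"
    and \<pi>1: "\<pi> 1 = n" and \<pi>n: "\<pi> n \<noteq> 1" and n: "1 < n"
  shows "\<pi> = down_cycle (cycle_of \<pi> 1)"
proof -
  define C where "C = cycle_of \<pi> 1"
  have one: "(1::nat) \<in> {1..n}" using n by simp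
  have moved1: "\<pi> 1 \<noteq> 1" using \<pi>1 n by simp
  note single = cyclic_weight_1_single_cycle[OF p w one moved1, folded C_def]
  have fin: "finite C" and sub: "C \<subseteq> {1..n}" and im: "\<pi> ` C = C"
    using finite_cycle_of[OF p _ one] cycle_of_subset[OF p one] image_cycle_of[OF p _ one]
    by (simp_all add: C_def)
  have one_C: "1 \<in> C" unfolding C_def by (rule self_in_cycle_of)
  then have n_C: "n \<in> C" using cycle_of_closed[of 1 \<pi> 1] \<pi>1 by (simp add: C_def)
  have permC: "\<pi> permutes C" using permutes_superset[OF p] single(2) by blast
  have moved: "\<pi> c \<noteq> c" if "c \<in> C" for c
    using fixpoint_in_cycle_of[OF permutes_inj[OF p]] that moved1 unfolding C_def by blast
  obtain y where y: "y \<in> C" "\<pi> y = 1" using im one_C by (metis imageE)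
  have "\<pi> n \<in> C" using im n_C by blast
  then have "{n, y} \<subseteq> {c \<in> C. c > \<pi> c}" "y \<noteq> n"
    using y n_C \<pi>n moved[OF n_C] moved[OF y(1)] sub by auto
  then have "card {n, y} \<le> cdes \<pi> C" unfolding cdes_def using fin by (intro card_mono) auto
  then have "casc \<pi> C = 1" using single(1) \<open>y \<noteq> n\<close> by simp
  moreover have "Min C = 1" using fin sub one_C by (intro Min_eqI) auto
  ultimately have "\<And>c. c \<in> C \<Longrightarrow> c \<noteq> Min C \<Longrightarrow> \<pi> c < c"
    using decreasing_if_casc_1[OF fin im] moved by blast
  then show ?thesis using eq_down_cycle_if_decreasing[OF permC fin] by (simp add: C_def)
qed

lemma p_count_set_eq_down_cycle:
  assumes n: "3 \<le> n" and j: "2 \<le> j" "j < n" and p: "\<pi> permutes {1..n}"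
    and odd: "odd_order n \<pi>" and w: "cyclic_weight n \<pi> = 1" and \<pi>1: "\<pi> 1 = n" and \<pi>n: "\<pi> n = j"
  shows "\<exists>S \<subseteq> {2..<j}. even (card S) \<and> \<pi> = down_cycle ({1, n, j} \<union> S)"
proof -
  define C where "C = cycle_of \<pi> 1"
  have one: "(1::nat) \<in> {1..n}" using n by simp
  have \<pi>_eq: "\<pi> = down_cycle C"
    unfolding C_def using weight_1_perm_eq_down_cycle[OF p w \<pi>1] \<pi>n j n by simp
  have fin: "finite C" and sub: "C \<subseteq> {1..n}"
    using finite_cycle_of[OF p _ one] cycle_of_subset[OF p one] by (simp_all add: C_def)
  have "1 \<in> C" unfolding C_def by (rule self_in_cycle_of)
  then have in_C: "1 \<in> C" "n \<in> C" "j \<in> C"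
    using cycle_of_closed[of 1 \<pi> 1] cycle_of_closed[of n \<pi> 1] \<pi>1 \<pi>n by (simp_all add: C_def)
  have "Min C = 1" using fin sub in_C by (intro Min_eqI) auto
  then have j_Max: "j = Max {y \<in> C. y < n}"
    using down_cycle_eq_Max_less[OF fin in_C(2)] \<pi>_eq \<pi>n n by simp
  have S: "C - {1, n, j} \<subseteq> {2..<j}"
  proof
    fix c assume c: "c \<in> C - {1, n, j}"
    then have "c < n" "1 \<le> c" "c \<noteq> 1" "c \<noteq> j" using sub by fastforce+
    then have "c \<le> Max {y \<in> C. y < n}" using fin c by (intro Max_ge) auto
    then show "c \<in> {2..<j}" using j_Max \<open>1 \<le> c\<close> \<open>c \<noteq> 1\<close> \<open>c \<noteq> j\<close> by auto
  qed
  have C_eq: "C = {1, n, j} \<union> (C - {1, n, j})" using in_C by blast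
  have "odd (card C)" using odd one unfolding odd_order_def cycles_of_def C_def by blast
  then have "even (card (C - {1, n, j}))" using card_1_n_j_Un[OF _ j(2) S] j C_eq by simp
  moreover have "\<pi> = down_cycle ({1, n, j} \<union> (C - {1, n, j}))"
    by (subst C_eq[symmetric]) (rule \<pi>_eq)
  ultimately show ?thesis using S by blast
qed

lemma inj_on_down_cycle_1_n_j:
  fixes j n :: nat
  assumes "1 < j" "j < n"
  shows "inj_on (\<lambda>S. down_cycle ({1, n, j} \<union> S)) (Pow {2..<j})"
proof (rule inj_onI)
  fix S T assume S: "S \<in> Pow {2..<j}" and T: "T \<in> Pow {2..<j}"
    and eq: "down_cycle ({1, n, j} \<union> S) = down_cycle ({1, n, j} \<union> T)"
  have "cycle_of (down_cycle ({1, n, j} \<union> U)) 1 = {1, n, j} \<union> U" if "U \<in> Pow {2..<j}" for U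
    using that by (intro cycle_of_down_cycle) (auto intro: finite_subset)
  then have "{1, n, j} \<union> S = {1, n, j} \<union> T" using S T eq by metis
  moreover have "{1, n, j} \<inter> S = {}" "{1, n, j} \<inter> T = {}" using S T assms by auto
  ultimately show "S = T" by blast
qed

lemma p_count_1_1_j:
  assumes n: "3 \<le> n" and j: "2 \<le> j" "j < n"
  shows "p_count n 1 1 j = card {S. S \<subseteq> {2..<j} \<and> even (card S)}"
proof -
  let ?E = "{S. S \<subseteq> {2..<j} \<and> even (card S)}"
  have "{\<pi>. \<pi> permutes {1..n} \<and> odd_order n \<pi> \<and> cyclic_weight n \<pi> = 1 \<and> \<pi> 1 = n \<and> \<pi> n = j}
      = (\<lambda>S. down_cycle ({1, n, j} \<union> S)) ` ?E"
  proof (intro set_eqI iffI)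
    fix \<pi> assume "\<pi> \<in> {\<pi>. \<pi> permutes {1..n} \<and> odd_order n \<pi> \<and> cyclic_weight n \<pi> = 1 \<and> \<pi> 1 = n \<and> \<pi> n = j}"
    then show "\<pi> \<in> (\<lambda>S. down_cycle ({1, n, j} \<union> S)) ` ?E"
      using p_count_set_eq_down_cycle[OF assms, of \<pi>] by auto
  next
    fix \<pi> assume "\<pi> \<in> (\<lambda>S. down_cycle ({1, n, j} \<union> S)) ` ?E"
    then show "\<pi> \<in> {\<pi>. \<pi> permutes {1..n} \<and> odd_order n \<pi> \<and> cyclic_weight n \<pi> = 1 \<and> \<pi> 1 = n \<and> \<pi> n = j}"
      using down_cycle_in_p_count_set[OF assms] by blast
  qed
  moreover have "inj_on (\<lambda>S. down_cycle ({1, n, j} \<union> S)) ?E"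
    by (rule inj_on_subset[OF inj_on_down_cycle_1_n_j]) (use j in auto)
  ultimately show ?thesis by (simp add: p_count_def card_image)
qed

lemma card_even_subsets:
  assumes "finite A" "A \<noteq> {}"
  shows "2 * card {S. S \<subseteq> A \<and> even (card S)} = 2 ^ card A"
proof -
  let ?E = "{S. S \<subseteq> A \<and> even (card S)}" and ?O = "{S. S \<subseteq> A \<and> odd (card S)}"
  have "card ?E = card ?O" using card_subsupersets_even_odd[of A "{}"] assms by auto
  moreover have "card ?E + card ?O = card (Pow A)"
    using assms(1) by (subst card_Un_disjoint[symmetric]) (auto intro: arg_cong[where f = card])
  ultimately show ?thesis using assms(1) by (simp add: card_Pow)
qed

theorem proposition4p1:
  fixes n d j :: nat
  assumes "d \<in> {0, 1}" and "n \<ge> 3" and "2 \<le> j" and "j \<le> n - 1"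
  shows "b_count n d 1 j + b_count n d j 1 = 2 * p_count n d 1 j"
proof -
  have n: "3 \<le> n" and j: "2 \<le> j" "j < n" using assms by auto
  consider "d = 0" | "d = 1" using assms(1) by blast
  then show ?thesis
  proof cases
    case 1
    then show ?thesis using n j by (simp add: b_count_0_eq_0 p_count_0_eq_0)
  next
    case 2
    have "2 * card {S. S \<subseteq> {2..<j} \<and> even (card S)} = (if j = 2 then 2 else 2 ^ (j - 2))"
    proof (cases "j = 2")
      case True
      then have "{S. S \<subseteq> {2..<j} \<and> even (card S)} = {{}}" by auto
      then show ?thesis using True by simp
    next
      case False
      then show ?thesis using card_even_subsets[of "{2..<j}"] j by simp
    qed
    then show ?thesis
      using 2 b_count_1_1_j[OF n j] b_count_1_j_1[OF n j] p_count_1_1_j[OF n j] by simp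
  qed
qed

end
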